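(* Let $a\in(0,1)$, $p\in(0,1)$, and let $(X_t)_{t=0,\dots,n}$ be a stationary Markov chain generated by the copula $C(u,v)=a\min(u,v)+(1-a)\max(u+v-1,0)$ and Bernoulli($p$) marginal distribution. If $a=p<1/2$ or $a=1-p\le1/2$, then $X_0,\dots,X_n$ are independent.
   Context: A stationary Markov chain $(X_t)$ is generated by a copula $C$ and a marginal cdf $F$ if each $X_t$ has cdf $F$ and $P(X_t\le x,X_{t+1}\le y)=C(F(x),F(y))$ for all $x,y$; Bernoulli($p$) means $P(X_t=1)=p=1-P(X_t=0)$. *)

theory Defs
  imports "HOL-Probability.Probability"
begin

definition copula_mix :: "real \<Rightarrow> real \<Rightarrow> real \<Rightarrow> real" where
  "copula_mix a u v = a * min u v + (1 - a) * max (u + v - 1) 0"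

definition bernoulli_cdf :: "real \<Rightarrow> real \<Rightarrow> real" where
  "bernoulli_cdf p x = (if x < 0 then 0 else if x < 1 then 1 - p else 1)"

text \<open>The Markov property is stated for (a.s. discretely valued) chains without division:
  P(X_0=x_0,..,X_{t+1}=x_{t+1}) P(X_t=x_t) = P(X_0=x_0,..,X_t=x_t) P(X_t=x_t, X_{t+1}=x_{t+1}).\<close>
definition stationary_markov_copula ::
  "'a measure \<Rightarrow> (nat \<Rightarrow> 'a \<Rightarrow> real) \<Rightarrow> nat \<Rightarrow> (real \<Rightarrow> real \<Rightarrow> real) \<Rightarrow> (real \<Rightarrow> real) \<Rightarrow> bool"
where
  "stationary_markov_copula M X n C F \<longleftrightarrow>
     prob_space M \<and>
     (\<forall>t\<le>n. X t \<in> borel_measurable M) \<and>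
     (\<forall>t\<le>n. \<forall>x. measure M {\<omega>\<in>space M. X t \<omega> \<le> x} = F x) \<and>
     (\<forall>t<n. \<forall>x y. measure M {\<omega>\<in>space M. X t \<omega> \<le> x \<and> X (Suc t) \<omega> \<le> y} = C (F x) (F y)) \<and>
     (\<forall>t<n. \<forall>x :: nat \<Rightarrow> real.
        measure M {\<omega>\<in>space M. \<forall>i\<le>Suc t. X i \<omega> = x i} * measure M {\<omega>\<in>space M. X t \<omega> = x t}
        = measure M {\<omega>\<in>space M. \<forall>i\<le>t. X i \<omega> = x i}
          * measure M {\<omega>\<in>space M. X t \<omega> = x t \<and> X (Suc t) \<omega> = x (Suc t)})"

end

theory Submission
  imports Defs
begin

text \<open>
  The copula enters only through the value P(X_t = 0, X_{t+1} = 0) = C(1-p, 1-p), and either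
  hypothesis on a makes this equal to (1-p)^2 = P(X_t = 0) P(X_{t+1} = 0). For {0,1}-valued
  variables independence of this one cell forces independence of the pair (X_t, X_{t+1}).
  The Markov property then factorises the joint mass function of (X_0, ..., X_n) into the
  product of its marginals, and finitely-valued random variables with factorising joint mass
  function are independent.
\<close>

lemma (in prob_space) prob_eq_sum_of_AE_partition:
  assumes "finite S" "A \<in> events" "\<And>s. s \<in> S \<Longrightarrow> E s \<in> events" "disjoint_family_on E S"
    and "AE \<omega> in M. \<omega> \<in> A \<longleftrightarrow> (\<exists>s\<in>S. \<omega> \<in> E s)"
  shows "prob A = (\<Sum>s\<in>S. prob (E s))"
proof -
  have "prob A = prob (\<Union>s\<in>S. E s)"
    using assms by (intro measure_eq_AE) auto
  also have "\<dots> = (\<Sum>s\<in>S. prob (E s))"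
    using assms by (intro measure_finite_Union) (auto simp: emeasure_eq_measure)
  finally show ?thesis .
qed

lemma (in prob_space) prob_in_eq_sum_prob_eq:
  fixes Y :: "'a \<Rightarrow> 'b::t1_space"
  assumes [measurable]: "Y \<in> borel_measurable M" "B \<in> sets borel"
    and "finite V" "AE \<omega> in M. Y \<omega> \<in> V"
  shows "prob {\<omega>\<in>space M. Y \<omega> \<in> B} = (\<Sum>v\<in>B \<inter> V. prob {\<omega>\<in>space M. Y \<omega> = v})"
  using assms(3,4)
  by (intro prob_eq_sum_of_AE_partition) (auto simp: disjoint_family_on_def)

lemma (in prob_space) indep_vars_finite_valuedI:
  fixes X :: "'i \<Rightarrow> 'a \<Rightarrow> 'b::t1_space"
  assumes "finite I" "I \<noteq> {}" "finite V"
    and meas [measurable]: "\<And>i. i \<in> I \<Longrightarrow> X i \<in> borel_measurable M"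
    and AE_in_V: "AE \<omega> in M. \<forall>i\<in>I. X i \<omega> \<in> V"
    and prod: "\<And>x. (\<forall>i\<in>I. x i \<in> V) \<Longrightarrow>
      prob {\<omega>\<in>space M. \<forall>i\<in>I. X i \<omega> = x i} = (\<Prod>i\<in>I. prob {\<omega>\<in>space M. X i \<omega> = x i})"
  shows "indep_vars (\<lambda>_. borel) X I"
proof (subst indep_vars_finite[where E = "\<lambda>_. sets borel"])
  let ?E = "\<lambda>x. {\<omega>\<in>space M. \<forall>i\<in>I. X i \<omega> = x i}"
  show "\<forall>A\<in>\<Pi> i\<in>I. sets borel.
    prob (\<Inter>i\<in>I. X i -` A i \<inter> space M) = (\<Prod>i\<in>I. prob (X i -` A i \<inter> space M))"
  proof
    fix A :: "'i \<Rightarrow> 'b set" assume A: "A \<in> (\<Pi> i\<in>I. sets borel)"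
    let ?P = "PiE I (\<lambda>i. A i \<inter> V)"
    have [measurable]: "i \<in> I \<Longrightarrow> A i \<in> sets borel" for i using A by auto
    have marginal:
      "prob (X i -` A i \<inter> space M) = (\<Sum>v\<in>A i \<inter> V. prob {\<omega>\<in>space M. X i \<omega> = v})"
      if "i \<in> I" for i
    proof -
      have "AE \<omega> in M. X i \<omega> \<in> V" using AE_in_V by eventually_elim (use that in blast)
      then have "prob {\<omega>\<in>space M. X i \<omega> \<in> A i} = (\<Sum>v\<in>A i \<inter> V. prob {\<omega>\<in>space M. X i \<omega> = v})"
        using that assms(3) by (intro prob_in_eq_sum_prob_eq) auto
      moreover have "X i -` A i \<inter> space M = {\<omega>\<in>space M. X i \<omega> \<in> A i}" by blast
      ultimately show ?thesis by simp
    qed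
    have "prob (\<Inter>i\<in>I. X i -` A i \<inter> space M) = (\<Sum>x\<in>?P. prob (?E x))"
    proof (rule prob_eq_sum_of_AE_partition)
      show "disjoint_family_on ?E ?P"
        by (auto simp: disjoint_family_on_def PiE_iff intro!: extensionalityI)
      show "AE \<omega> in M. \<omega> \<in> (\<Inter>i\<in>I. X i -` A i \<inter> space M) \<longleftrightarrow> (\<exists>x\<in>?P. \<omega> \<in> ?E x)"
        using AE_in_V
      proof eventually_elim
        case (elim \<omega>)
        then show ?case
          using \<open>I \<noteq> {}\<close> by (auto intro!: bexI[of _ "restrict (\<lambda>i. X i \<omega>) I"])
      qed
    qed (use assms in \<open>auto intro!: finite_PiE\<close>)
    also have "\<dots> = (\<Sum>x\<in>?P. \<Prod>i\<in>I. prob {\<omega>\<in>space M. X i \<omega> = x i})"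
      by (intro sum.cong refl prod) auto
    also have "\<dots> = (\<Prod>i\<in>I. \<Sum>v\<in>A i \<inter> V. prob {\<omega>\<in>space M. X i \<omega> = v})"
      using assms by (intro prod_sum_PiE[symmetric]) auto
    also have "\<dots> = (\<Prod>i\<in>I. prob (X i -` A i \<inter> space M))"
      using marginal by simp
    finally show
      "prob (\<Inter>i\<in>I. X i -` A i \<inter> space M) = (\<Prod>i\<in>I. prob (X i -` A i \<inter> space M))" .
  qed
qed (use assms sets.sigma_sets_eq[of borel] in \<open>auto simp: Int_stable_def\<close>)

lemma (in prob_space) binary_pair_prob_eq_prod:
  fixes Y Z :: "'a \<Rightarrow> real"
  assumes [measurable]: "Y \<in> borel_measurable M" "Z \<in> borel_measurable M"
    and "AE \<omega> in M. Y \<omega> \<in> {0, 1}" "AE \<omega> in M. Z \<omega> \<in> {0, 1}"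
    and zero_cell: "prob {\<omega>\<in>space M. Y \<omega> = 0 \<and> Z \<omega> = 0}
      = prob {\<omega>\<in>space M. Y \<omega> = 0} * prob {\<omega>\<in>space M. Z \<omega> = 0}"
    and "u \<in> {0, 1}" "v \<in> {0, 1}"
  shows "prob {\<omega>\<in>space M. Y \<omega> = u \<and> Z \<omega> = v}
    = prob {\<omega>\<in>space M. Y \<omega> = u} * prob {\<omega>\<in>space M. Z \<omega> = v}"
proof -
  let ?E = "\<lambda>u v. {\<omega>\<in>space M. Y \<omega> = u \<and> Z \<omega> = v}"
  have row: "prob {\<omega>\<in>space M. Y \<omega> = u} = prob (?E u 0) + prob (?E u 1)" for u
    using assms(4)
    by (subst prob_eq_sum_of_AE_partition[where S = "{0, 1}" and E = "?E u"])
      (auto simp: disjoint_family_on_def)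
  have column: "prob {\<omega>\<in>space M. Z \<omega> = v} = prob (?E 0 v) + prob (?E 1 v)" for v
    using assms(3)
    by (subst prob_eq_sum_of_AE_partition[where S = "{0, 1}" and E = "\<lambda>u. ?E u v"])
      (auto simp: disjoint_family_on_def)
  have total: "prob {\<omega>\<in>space M. W \<omega> = 1} = 1 - prob {\<omega>\<in>space M. W \<omega> = 0}"
    if [measurable]: "W \<in> borel_measurable M" and "AE \<omega> in M. W \<omega> \<in> {0, 1}"
    for W :: "'a \<Rightarrow> real"
  proof -
    have "prob (space M) = (\<Sum>v\<in>{0, 1}. prob {\<omega>\<in>space M. W \<omega> = v})"
      using that(2) by (intro prob_eq_sum_of_AE_partition) (auto simp: disjoint_family_on_def)
    then show ?thesis by (simp add: prob_space)
  qed
  have cells: "c01 = y0 * z1 \<and> c10 = y1 * z0 \<and> c11 = y1 * z1"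
    if "y0 = c00 + c01" "z0 = c00 + c10" "z1 = c01 + c11"
      and "y1 = 1 - y0" "z1 = 1 - z0" "c00 = y0 * z0"
    for y0 y1 z0 z1 c00 c01 c10 c11 :: real
  proof -
    have "c01 = y0 - c00" "c10 = z0 - c00" "c11 = z1 - c01" using that(1-3) by simp_all
    then show ?thesis using that(4-6) by (simp add: ring_distribs)
  qed
  show ?thesis
    using cells[OF row[of 0] column[of 0] column[of 1] total[OF assms(1,3)] total[OF assms(2,4)]
        zero_cell] zero_cell assms(6,7)
    by auto
qed

lemma (in prob_space) markov_joint_prob_eq_prod:
  fixes X :: "nat \<Rightarrow> 'a \<Rightarrow> real"
  assumes [measurable]: "\<And>t. t \<le> n \<Longrightarrow> X t \<in> borel_measurable M"
    and markov: "\<And>t. t < n \<Longrightarrow>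
      prob {\<omega>\<in>space M. \<forall>i\<le>Suc t. X i \<omega> = x i} * prob {\<omega>\<in>space M. X t \<omega> = x t}
      = prob {\<omega>\<in>space M. \<forall>i\<le>t. X i \<omega> = x i}
        * prob {\<omega>\<in>space M. X t \<omega> = x t \<and> X (Suc t) \<omega> = x (Suc t)}"
    and pair: "\<And>t. t < n \<Longrightarrow>
      prob {\<omega>\<in>space M. X t \<omega> = x t \<and> X (Suc t) \<omega> = x (Suc t)}
      = prob {\<omega>\<in>space M. X t \<omega> = x t} * prob {\<omega>\<in>space M. X (Suc t) \<omega> = x (Suc t)}"
  shows "m \<le> n \<Longrightarrow> prob {\<omega>\<in>space M. \<forall>i\<le>m. X i \<omega> = x i} = (\<Prod>i\<le>m. prob {\<omega>\<in>space M. X i \<omega> = x i})"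
proof (induction m)
  case 0
  then show ?case by simp
next
  case (Suc m)
  let ?p = "\<lambda>i. prob {\<omega>\<in>space M. X i \<omega> = x i}"
  have IH: "prob {\<omega>\<in>space M. \<forall>i\<le>m. X i \<omega> = x i} = (\<Prod>i\<le>m. ?p i)"
    using Suc by simp
  show ?case
  proof (cases "?p m = 0")
    case True \<comment> \<open>the Markov identity says nothing here, but both sides vanish\<close>
    have "prob {\<omega>\<in>space M. \<forall>i\<le>Suc m. X i \<omega> = x i} \<le> ?p m"
      using Suc.prems by (intro finite_measure_mono) auto
    then have "prob {\<omega>\<in>space M. \<forall>i\<le>Suc m. X i \<omega> = x i} = 0"
      using True measure_nonneg[of M] by (simp add: order_antisym)
    moreover have "(\<Prod>i\<le>Suc m. ?p i) = 0"
      by (rule prod_zero) (use True in auto)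
    ultimately show ?thesis by simp
  next
    case False
    then show ?thesis
      using markov[of m] pair[of m] IH Suc.prems by (simp add: mult_ac)
  qed
qed

definition bernoulli_real :: "real \<Rightarrow> real measure" where
  "bernoulli_real p = distr (measure_pmf (bernoulli_pmf p)) borel of_bool"

lemma real_distribution_bernoulli_real: "real_distribution (bernoulli_real p)"
  unfolding bernoulli_real_def
  by (intro prob_space.real_distribution_distr prob_space_measure_pmf) simp

lemma cdf_bernoulli_real:
  assumes "0 \<le> p" "p \<le> 1"
  shows "cdf (bernoulli_real p) x = bernoulli_cdf p x"
proof -
  have "cdf (bernoulli_real p) x = measure_pmf.prob (bernoulli_pmf p) {b. of_bool b \<le> x}"
    by (simp add: bernoulli_real_def cdf_def measure_distr vimage_def)
  also have "\<dots> = bernoulli_cdf p x"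
  proof (cases "x < 0")
    case False
    then have "{b. of_bool b \<le> x} = (if x < 1 then {False} else UNIV)" by auto
    then show ?thesis using assms False by (simp add: measure_pmf_single bernoulli_cdf_def)
  qed (simp add: bernoulli_cdf_def)
  finally show ?thesis .
qed

lemma (in prob_space) distr_eq_bernoulli_real:
  fixes Y :: "'a \<Rightarrow> real"
  assumes "Y \<in> borel_measurable M" "0 \<le> p" "p \<le> 1"
    and "\<And>x. prob {\<omega>\<in>space M. Y \<omega> \<le> x} = bernoulli_cdf p x"
  shows "distr M borel Y = bernoulli_real p"
proof (rule cdf_unique)
  show "cdf (distr M borel Y) = cdf (bernoulli_real p)"
    using assms
    by (auto simp: fun_eq_iff cdf_def measure_distr vimage_def Int_def conj_commute
        cdf_bernoulli_real[symmetric])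
qed (use assms real_distribution_bernoulli_real in auto)

lemma (in prob_space) AE_in_01_of_bernoulli_cdf:
  fixes Y :: "'a \<Rightarrow> real"
  assumes "Y \<in> borel_measurable M" "0 \<le> p" "p \<le> 1"
    and "\<And>x. prob {\<omega>\<in>space M. Y \<omega> \<le> x} = bernoulli_cdf p x"
  shows "AE \<omega> in M. Y \<omega> \<in> {0, 1}"
proof -
  have "AE y in bernoulli_real p. y \<in> {0, 1}"
    unfolding bernoulli_real_def by (subst AE_distr_iff) auto
  then show ?thesis
    using assms by (subst (asm) distr_eq_bernoulli_real[symmetric]) (auto simp: AE_distr_iff)
qed

lemma copula_mix_diagonal_eq_square:
  assumes "(a = p \<and> p < 1/2) \<or> (a = 1 - p \<and> a \<le> 1/2)"
  shows "copula_mix a (1 - p) (1 - p) = (1 - p)^2"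
  using assms
proof
  assume "a = p \<and> p < 1/2"
  then show ?thesis by (simp add: copula_mix_def max_def power2_eq_square algebra_simps)
next
  assume "a = 1 - p \<and> a \<le> 1/2"
  then show ?thesis by (simp add: copula_mix_def max_absorb2 power2_eq_square)
qed

lemma stationary_markov_copulaD:
  assumes "stationary_markov_copula M X n C F"
  shows stationary_markov_copula_prob_space: "prob_space M"
    and stationary_markov_copula_measurable: "t \<le> n \<Longrightarrow> X t \<in> borel_measurable M"
    and stationary_markov_copula_cdf: "t \<le> n \<Longrightarrow> measure M {\<omega>\<in>space M. X t \<omega> \<le> x} = F x"
    and stationary_markov_copula_joint_cdf: "t < n \<Longrightarrow>
      measure M {\<omega>\<in>space M. X t \<omega> \<le> x \<and> X (Suc t) \<omega> \<le> y} = C (F x) (F y)"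
    and stationary_markov_copula_markov: "t < n \<Longrightarrow>
      measure M {\<omega>\<in>space M. \<forall>i\<le>Suc t. X i \<omega> = z i} * measure M {\<omega>\<in>space M. X t \<omega> = z t}
      = measure M {\<omega>\<in>space M. \<forall>i\<le>t. X i \<omega> = z i}
        * measure M {\<omega>\<in>space M. X t \<omega> = z t \<and> X (Suc t) \<omega> = z (Suc t)}"
  using assms unfolding stationary_markov_copula_def by blast+

lemma stationary_markov_copula_bernoulli_AE_01:
  assumes "stationary_markov_copula M X n C (bernoulli_cdf p)" "0 \<le> p" "p \<le> 1" "t \<le> n"
  shows "AE \<omega> in M. X t \<omega> \<in> {0, 1}"
proof -
  interpret prob_space M by (rule stationary_markov_copula_prob_space[OF assms(1)])
  show ?thesis
    by (rule AE_in_01_of_bernoulli_cdf[OF stationary_markov_copula_measurable[OF assms(1,4)]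
          assms(2,3) stationary_markov_copula_cdf[OF assms(1,4)]])
qed

lemma stationary_markov_copula_bernoulli_consecutive_indep:
  assumes chain: "stationary_markov_copula M X n C (bernoulli_cdf p)" "0 \<le> p" "p \<le> 1"
    and diagonal: "C (1 - p) (1 - p) = (1 - p)^2"
    and "t < n" "u \<in> {0, 1}" "v \<in> {0, 1}"
  shows "measure M {\<omega>\<in>space M. X t \<omega> = u \<and> X (Suc t) \<omega> = v}
    = measure M {\<omega>\<in>space M. X t \<omega> = u} * measure M {\<omega>\<in>space M. X (Suc t) \<omega> = v}"
proof -
  interpret prob_space M by (rule stationary_markov_copula_prob_space[OF chain(1)])
  note meas [measurable] = stationary_markov_copula_measurable[OF chain(1)]
  note binary = stationary_markov_copula_bernoulli_AE_01[OF chain]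
  have "t \<le> n" "Suc t \<le> n" using \<open>t < n\<close> by simp_all
  have zero: "prob {\<omega>\<in>space M. X s \<omega> = 0} = 1 - p" if "s \<le> n" for s
  proof -
    have "prob {\<omega>\<in>space M. X s \<omega> = 0} = prob {\<omega>\<in>space M. X s \<omega> \<le> 0}"
      by (rule measure_eq_AE) (use binary[OF that] in auto, use that in measurable)
    then show ?thesis
      using stationary_markov_copula_cdf[OF chain(1) that] by (simp add: bernoulli_cdf_def)
  qed
  have "prob {\<omega>\<in>space M. X t \<omega> = 0 \<and> X (Suc t) \<omega> = 0}
      = prob {\<omega>\<in>space M. X t \<omega> \<le> 0 \<and> X (Suc t) \<omega> \<le> 0}"
    by (rule measure_eq_AE)
      (use AE_conjI[OF binary binary, of t "Suc t"] \<open>t < n\<close> in auto, use \<open>t < n\<close> in measurable)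
  also have "\<dots> = C (1 - p) (1 - p)"
    using stationary_markov_copula_joint_cdf[OF chain(1) \<open>t < n\<close>, of 0 0]
    by (simp add: bernoulli_cdf_def)
  also have "\<dots> = prob {\<omega>\<in>space M. X t \<omega> = 0} * prob {\<omega>\<in>space M. X (Suc t) \<omega> = 0}"
    using diagonal zero[OF \<open>t \<le> n\<close>] zero[OF \<open>Suc t \<le> n\<close>] by (simp add: power2_eq_square)
  finally show ?thesis
    by (rule binary_pair_prob_eq_prod[OF meas[OF \<open>t \<le> n\<close>] meas[OF \<open>Suc t \<le> n\<close>]
          binary[OF \<open>t \<le> n\<close>] binary[OF \<open>Suc t \<le> n\<close>] _ assms(6,7)])
qed

lemma stationary_markov_copula_joint_prob_eq_prod:
  assumes chain: "stationary_markov_copula M X n C F"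
    and consecutive: "\<And>t. t < n \<Longrightarrow>
      measure M {\<omega>\<in>space M. X t \<omega> = x t \<and> X (Suc t) \<omega> = x (Suc t)}
      = measure M {\<omega>\<in>space M. X t \<omega> = x t} * measure M {\<omega>\<in>space M. X (Suc t) \<omega> = x (Suc t)}"
  shows "measure M {\<omega>\<in>space M. \<forall>i\<le>n. X i \<omega> = x i} = (\<Prod>i\<le>n. measure M {\<omega>\<in>space M. X i \<omega> = x i})"
proof -
  interpret prob_space M by (rule stationary_markov_copula_prob_space[OF chain])
  show ?thesis
    by (rule markov_joint_prob_eq_prod[OF stationary_markov_copula_measurable[OF chain]
          stationary_markov_copula_markov[OF chain] consecutive order_refl])
qed

theorem proposition5:
  fixes M :: "'a measure" and X :: "nat \<Rightarrow> 'a \<Rightarrow> real" and n :: nat and a p :: real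
  assumes "0 < a" "a < 1" "0 < p" "p < 1"
    and "stationary_markov_copula M X n (copula_mix a) (bernoulli_cdf p)"
    and "(a = p \<and> p < 1/2) \<or> (a = 1 - p \<and> a \<le> 1/2)"
  shows "prob_space.indep_vars M (\<lambda>_. borel) X {0..n}"
proof -
  interpret prob_space M by (rule stationary_markov_copula_prob_space[OF assms(5)])
  have p01: "0 \<le> p" "p \<le> 1" using assms(3,4) by simp_all
  note consecutive = stationary_markov_copula_bernoulli_consecutive_indep[OF assms(5) p01
      copula_mix_diagonal_eq_square[OF assms(6)]]
  have joint: "prob {\<omega>\<in>space M. \<forall>i\<le>n. X i \<omega> = x i} = (\<Prod>i\<le>n. prob {\<omega>\<in>space M. X i \<omega> = x i})"
    if "\<forall>i\<le>n. x i \<in> {0, 1}" for x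
    by (rule stationary_markov_copula_joint_prob_eq_prod[OF assms(5)], rule consecutive)
      (use that in auto)
  show ?thesis
    using joint stationary_markov_copula_bernoulli_AE_01[OF assms(5) p01]
      stationary_markov_copula_measurable[OF assms(5)]
    by (intro indep_vars_finite_valuedI[where V = "{0, 1}"] AE_finite_allI)
      (auto simp: atLeast0AtMost Ball_def)
qed

end
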